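(* Let $\phi\in\,]0,\pi[$, $M\in\mathbb{R}$, $N>0$. Let $\Sigma$ be the Keplerian branch around ${\rm O}$ in the plane ${\rm O}xy$ with equation $r=My+N$. Consider the affine map $(x_1,y_1)\mapsto(x_2,y_2)$ defined by $x_1=x_2\sin\phi-y_2M\cos\phi-N\cos\phi$, $y_1=y_2$. Then the image of $\Sigma$ by this map is the Keplerian branch around ${\rm O}$ with equation $r=x\cos\phi+yM\sin\phi+N\sin\phi$.
   Context: In the Euclidean plane ${\rm O}xy$, $r=\sqrt{x^2+y^2}$. A Keplerian branch around ${\rm O}$ is the image of a solution of Newton's system $\ddot q=-q/\|q\|^3$ (extended through collisions by bouncing back along the same ray with the same energy). For $\gamma>0$, the set of points satisfying $r=\alpha x+\beta y+\gamma$ is an (irreducible) Keplerian branch around ${\rm O}$, and every nonrectilinear Keplerian branch is of this form. *)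

theory Defs
  imports Complex_Main
begin

text \<open>The set of points of the plane Oxy satisfying r = alpha x + beta y + gamma,
  where r = sqrt(x^2+y^2). For gamma > 0 this is a Keplerian branch around O.\<close>
definition kepler_branch :: "real \<Rightarrow> real \<Rightarrow> real \<Rightarrow> (real \<times> real) set" where
  "kepler_branch \<alpha> \<beta> \<gamma> = {(x, y). sqrt (x\<^sup>2 + y\<^sup>2) = \<alpha> * x + \<beta> * y + \<gamma>}"

end

theory Submission
  imports Defs
begin

text \<open>Put \<open>L = M y + N\<close> and \<open>L' = x\<^sub>2 cos \<phi> + L sin \<phi>\<close>. The old branch is the nappe
  \<open>L \<ge> 0\<close> of the cone \<open>x\<^sub>1\<^sup>2 + y\<^sup>2 = L\<^sup>2\<close>, the new one the nappe \<open>L' \<ge> 0\<close> of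
  \<open>x\<^sub>2\<^sup>2 + y\<^sup>2 = L'\<^sup>2\<close>. The map \<open>(x\<^sub>2, L) \<mapsto> (x\<^sub>1, L')\<close> is a rotation, so
  \<open>x\<^sub>1\<^sup>2 - L\<^sup>2 = x\<^sub>2\<^sup>2 - L'\<^sup>2\<close> and the two cone equations agree. On the cone
  \<open>|x\<^sub>1| \<le> |L|\<close>, so \<open>L' sin \<phi> = L + x\<^sub>1 cos \<phi>\<close> has the sign of \<open>L\<close>, and symmetrically.\<close>

lemma sqrt_eq_iff_square:
  fixes a b :: real
  assumes "0 \<le> a"
  shows "sqrt a = b \<longleftrightarrow> 0 \<le> b \<and> a = b\<^sup>2"
  using assms by (metis real_sqrt_ge_zero real_sqrt_pow2 real_sqrt_unique)

lemma rotation_preserves_sum_squares: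
  fixes s c x L :: real
  assumes "s\<^sup>2 + c\<^sup>2 = 1"
  shows "(s * x - c * L)\<^sup>2 + (c * x + s * L)\<^sup>2 = x\<^sup>2 + L\<^sup>2"
proof -
  have "(s * x - c * L)\<^sup>2 + (c * x + s * L)\<^sup>2 = (s\<^sup>2 + c\<^sup>2) * (x\<^sup>2 + L\<^sup>2)"
    by (simp add: power2_eq_square algebra_simps)
  with assms show ?thesis by simp
qed

lemma nonneg_add_mult_le:
  fixes c w L :: real
  assumes "\<bar>c\<bar> \<le> 1" and "w\<^sup>2 \<le> L\<^sup>2" and "0 \<le> L"
  shows "0 \<le> L + c * w"
proof -
  have "\<bar>w\<bar> \<le> L"
    using assms(2,3) abs_le_square_iff[of w L] by simp
  then have "\<bar>c\<bar> * \<bar>w\<bar> \<le> 1 * L"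
    using assms(1) by (intro mult_mono) auto
  then have "\<bar>c * w\<bar> \<le> L"
    by (simp add: abs_mult)
  then show ?thesis
    by linarith
qed

lemma sqrt_rotated_eq_iff:
  fixes s c x y L :: real
  assumes sc: "s\<^sup>2 + c\<^sup>2 = 1" and s: "0 < s"
  shows "sqrt ((s * x - c * L)\<^sup>2 + y\<^sup>2) = L \<longleftrightarrow> sqrt (x\<^sup>2 + y\<^sup>2) = c * x + s * L"
proof -
  define w where "w = s * x - c * L"
  define u where "u = c * x + s * L"
  have cone: "w\<^sup>2 + y\<^sup>2 = L\<^sup>2 \<longleftrightarrow> x\<^sup>2 + y\<^sup>2 = u\<^sup>2"
    using rotation_preserves_sum_squares[OF sc, of x L] unfolding w_def u_def by linarith
  have "c\<^sup>2 \<le> 1\<^sup>2"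
    using sc zero_le_power2[of s] by (simp, linarith)
  then have c: "\<bar>c\<bar> \<le> 1"
    using abs_le_square_iff[of c 1] by simp
  have "s * u = (s\<^sup>2 + c\<^sup>2) * L + c * w"
    unfolding u_def w_def by (simp add: power2_eq_square algebra_simps)
  with sc have su: "s * u = L + c * w"
    by simp
  have sL: "s * L = u + (- c) * x"
    unfolding u_def by simp
  have "0 \<le> L \<and> w\<^sup>2 + y\<^sup>2 = L\<^sup>2 \<longleftrightarrow> 0 \<le> u \<and> x\<^sup>2 + y\<^sup>2 = u\<^sup>2"
  proof
    assume L: "0 \<le> L \<and> w\<^sup>2 + y\<^sup>2 = L\<^sup>2"
    then have "0 \<le> s * u"
      unfolding su by (intro nonneg_add_mult_le[OF c]) (use zero_le_power2[of y] in linarith)+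
    with L s cone show "0 \<le> u \<and> x\<^sup>2 + y\<^sup>2 = u\<^sup>2"
      by (simp add: zero_le_mult_iff)
  next
    assume u: "0 \<le> u \<and> x\<^sup>2 + y\<^sup>2 = u\<^sup>2"
    then have "0 \<le> s * L"
      unfolding sL by (intro nonneg_add_mult_le) (use c zero_le_power2[of y] in \<open>simp, linarith, simp\<close>)
    with u s cone show "0 \<le> L \<and> w\<^sup>2 + y\<^sup>2 = L\<^sup>2"
      by (simp add: zero_le_mult_iff)
  qed
  then show ?thesis
    unfolding w_def u_def by (simp add: sqrt_eq_iff_square del: real_sqrt_eq_iff)
qed

theorem lemma5:
  fixes \<phi> M N :: real
  assumes "0 < \<phi>" and "\<phi> < pi" and "0 < N"
  shows "{(x2, y2). \<exists>x1 y1. (x1, y1) \<in> kepler_branch 0 M N \<and>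
            x1 = x2 * sin \<phi> - y2 * M * cos \<phi> - N * cos \<phi> \<and> y1 = y2}
         = kepler_branch (cos \<phi>) (M * sin \<phi>) (N * sin \<phi>)"
proof -
  have "0 < sin \<phi>"
    using assms by (simp add: sin_gt_zero)
  then have "sqrt ((x * sin \<phi> - y * M * cos \<phi> - N * cos \<phi>)\<^sup>2 + y\<^sup>2) = M * y + N
      \<longleftrightarrow> sqrt (x\<^sup>2 + y\<^sup>2) = cos \<phi> * x + M * sin \<phi> * y + N * sin \<phi>" for x y
    using sqrt_rotated_eq_iff[where s = "sin \<phi>" and c = "cos \<phi>" and L = "M * y + N"]
    by (simp add: algebra_simps)
  then show ?thesis
    unfolding kepler_branch_def by (auto simp del: real_sqrt_eq_iff)
qed

end
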